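(* There is a unique $q_0\approx0.989681$ such that $\delta(q)>0$ for $q>q_0$ and $\delta(q)<0$ for $q<q_0$.
   Context: For $q\in\mathbb{R}$ define $\delta(q)=\frac{1-(2/\pi)^{3q-8/5}}{3q-8/5}-\frac1{3q}$ if $q>0$, $q\ne\frac8{15}$; $\delta(\frac8{15})=-\ln\frac2\pi-\frac58$; and $\delta(q)=-\infty$ if $q\le0$. (This is the limit as $x\to\pi/2^-$ of $\frac{U_{3q-8/5}(\sin x/x)}{U_q(\cos x)}-\frac13$, where $U_p(s)=\frac{1-s^p}{p}$, $U_0(s)=-\ln s$.) *)

theory Defs
  imports "HOL-Analysis.Analysis" "HOL-Library.Extended_Real"
begin

definition delta :: "real \<Rightarrow> ereal" where
  "delta q =
     (if q \<le> 0 then -\<infinity>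
      else if q = 8/15 then ereal (- ln (2/pi) - 5/8)
      else ereal ((1 - (2/pi) powr (3*q - 8/5)) / (3*q - 8/5) - 1/(3*q)))"

end

theory Submission
  imports Defs
begin

text \<open>With \<open>t = 3q\<close>, \<open>s = t - 8/5\<close> and \<open>c = ln (\<pi>/2)\<close> one has
  \<open>\<delta>(q) \<cdot> s \<cdot> t = 8/5 - t \<cdot> e\<^sup>-\<^sup>c\<^sup>s = 8/5 \<cdot> (1 - exp (\<phi> t - \<phi> (8/5)))\<close>
  for \<open>\<phi> t = ln t - c t\<close>. The function \<open>\<phi>\<close> increases up to \<open>1/c \<approx> 2.214\<close> and decreases
  afterwards, so it takes the value \<open>\<phi> (8/5)\<close> exactly once more, at some \<open>t\<^sub>1 \<approx> 2.969\<close>.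
  Comparing signs, \<open>\<delta>(q) < 0\<close> for \<open>3q < t\<^sub>1\<close> and \<open>\<delta>(q) > 0\<close> for \<open>3q > t\<^sub>1\<close>, so \<open>q\<^sub>0 = t\<^sub>1/3\<close>;
  its location follows from interval evaluations of \<open>\<phi>\<close> via the series for \<open>ln\<close>.\<close>

definition delta_profile :: "real \<Rightarrow> real" where
  "delta_profile t = ln t - ln (pi/2) * t"

lemma sign_threshold_unique:
  fixes a b :: "'a::dense_linorder"
  assumes "\<forall>x>a. P x" "\<forall>x<a. \<not> P x" "\<forall>x>b. P x" "\<forall>x<b. \<not> P x"
  shows "a = b"
  using assms by (metis dense linorder_neqE)

lemma ln_minus_linear_strict_increasing:
  fixes c a b :: real
  assumes "0 < c" "0 < a" "a < b" "b \<le> 1/c"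
  shows "ln a - c*a < ln b - c*b"
proof (rule DERIV_pos_imp_increasing_open[OF \<open>a < b\<close>])
  fix x assume x: "a < x" "x < b"
  have "0 < x" using x assms by linarith
  have "c * x < c * b" using x assms by simp
  moreover have "c * b \<le> 1" using assms by (simp add: field_simps)
  ultimately have "c < 1/x" using \<open>0 < x\<close> by (simp add: field_simps)
  then show "\<exists>y. DERIV (\<lambda>x. ln x - c*x) x :> y \<and> 0 < y"
    using \<open>0 < x\<close> by (auto intro!: derivative_eq_intros)
qed (use assms in \<open>auto intro!: continuous_intros\<close>)

lemma ln_minus_linear_strict_decreasing:
  fixes c a b :: real
  assumes "0 < c" "1/c \<le> a" "a < b"
  shows "ln b - c*b < ln a - c*a"
proof -
  have "0 < a" using assms by (smt (verit) divide_pos_pos)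
  show ?thesis
  proof (rule DERIV_neg_imp_decreasing_open[OF \<open>a < b\<close>])
    fix x assume x: "a < x" "x < b"
    have "0 < x" using x \<open>0 < a\<close> by linarith
    have "c * a < c * x" using x assms by simp
    moreover have "1 \<le> c * a" using assms by (simp add: field_simps)
    ultimately have "1/x < c" using \<open>0 < x\<close> by (simp add: field_simps)
    then show "\<exists>y. DERIV (\<lambda>x. ln x - c*x) x :> y \<and> y < 0"
      using \<open>0 < x\<close> by (auto intro!: derivative_eq_intros)
  qed (use \<open>0 < a\<close> in \<open>auto intro!: continuous_intros\<close>)
qed

lemma ln_half_pi_pos: "0 < ln (pi/2)"
  using pi_gt3 by simp

lemma ln_half_pi_bounds: "0.4515827045 < ln (pi/2)" "ln (pi/2) < (0.4515827054 :: real)"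
proof -
  \<comment> \<open>\<open>103993/33102\<close> and \<open>104348/33215\<close> are convergents of \<open>\<pi>\<close> on either side of it\<close>
  have "(0.4515827045 :: real) \<le> ln (103993/66204)"
    using ln_approx_bounds[of "103993/66204" 6] by (simp add: eval_nat_numeral)
  also have "\<dots> < ln (pi/2)"
    using pi_approx by (subst ln_less_cancel_iff) auto
  finally show "0.4515827045 < ln (pi/2)" .
  have "ln (pi/2) < ln (52174/33215 :: real)"
    using pi_approx by (subst ln_less_cancel_iff) auto
  also have "\<dots> \<le> 0.4515827054"
    using ln_approx_bounds[of "52174/33215" 6] by (simp add: eval_nat_numeral)
  finally show "ln (pi/2) < (0.4515827054 :: real)" .
qed

lemma inverse_ln_half_pi_bounds: "2.2 < 1 / ln (pi/2)" "1 / ln (pi/2) < (2.3 :: real)"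
  using ln_half_pi_pos ln_half_pi_bounds by (simp_all add: field_simps)

lemma ln_bounds_near_second_root:
  "0.61823555 \<le> ln (7996/4309 :: real)" "ln (1067/575 :: real) \<le> 0.61823622"
  using ln_approx_bounds[of "7996/4309" 7] ln_approx_bounds[of "1067/575" 7]
  by (simp_all add: eval_nat_numeral)

lemma delta_eq_profile:
  assumes "0 < q" "q \<noteq> 8/15"
  shows "delta q = ereal (8/5 * (1 - exp (delta_profile (3*q) - delta_profile (8/5)))
                          / ((3*q - 8/5) * (3*q)))"
proof -
  define c where "c = ln (pi/2)"
  define t where "t = 3*q"
  define s where "s = t - 8/5"
  have "t > 0" "s \<noteq> 0" using assms by (auto simp: t_def s_def)
  have "(2/pi) powr s = exp (- c * s)"
    using pi_gt_zero by (simp add: powr_def c_def ln_div)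
  moreover have "exp (delta_profile t - delta_profile (8/5)) = t * exp (- c * s) / (8/5)"
  proof -
    have "delta_profile t - delta_profile (8/5) = (ln t - ln (8/5)) + (- c * s)"
      by (simp add: delta_profile_def c_def s_def algebra_simps)
    then have "exp (delta_profile t - delta_profile (8/5)) = exp (ln t - ln (8/5)) * exp (- c * s)"
      by (simp only: exp_add)
    also have "exp (ln t - ln (8/5)) = t / (8/5)"
      using \<open>t > 0\<close> by (simp add: exp_diff)
    finally show ?thesis by simp
  qed
  ultimately show ?thesis
    using assms \<open>t > 0\<close> \<open>s \<noteq> 0\<close>
    by (simp add: delta_def t_def[symmetric] s_def[symmetric]) (simp add: field_simps s_def)
qed

lemma delta_pos_above_8_15:
  assumes "8/5 < 3*q" "delta_profile (3*q) < delta_profile (8/5)"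
  shows "0 < delta q"
  using assms by (subst delta_eq_profile) (auto intro!: divide_pos_pos)

lemma delta_neg_above_8_15:
  assumes "8/5 < 3*q" "delta_profile (8/5) < delta_profile (3*q)"
  shows "delta q < 0"
  using assms by (subst delta_eq_profile) (auto intro!: divide_neg_pos)

lemma delta_neg_below_8_15:
  assumes "0 < q" "3*q < 8/5" "delta_profile (3*q) < delta_profile (8/5)"
  shows "delta q < 0"
proof -
  have "(3*q - 8/5) * (3*q) < 0" using assms by (intro mult_neg_pos) auto
  then show ?thesis using assms by (subst delta_eq_profile) (auto intro!: divide_pos_neg)
qed

lemma delta_8_15_neg: "delta (8/15) < 0"
  using ln_half_pi_bounds pi_gt_zero by (simp add: delta_def ln_div)

lemma delta_profile_second_root:
  obtains t1 where "2.9690415 < t1" "t1 < 2.9690445" "delta_profile t1 = delta_profile (8/5)"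
proof -
  define c where "c = ln (pi/2)"
  \<comment> \<open>chosen so that \<open>tlo/(8/5) = 7996/4309\<close> and \<open>thi/(8/5) = 1067/575\<close> have small terms\<close>
  define tlo :: real where "tlo = 63968/21545"
  define thi :: real where "thi = 8536/2875"
  have ln_ratio: "ln t - ln (8/5) = ln (t / (8/5))" if "0 < t" for t :: real
    using that by (subst ln_div) auto
  have "delta_profile tlo - delta_profile (8/5) = ln (7996/4309) - c * (tlo - 8/5)"
    using ln_ratio[of tlo] by (simp add: delta_profile_def c_def tlo_def algebra_simps)
  moreover have "c * (tlo - 8/5) < 0.4515827054 * (tlo - 8/5)"
    using ln_half_pi_bounds by (simp add: c_def tlo_def)
  ultimately have lo: "delta_profile (8/5) < delta_profile tlo"
    using ln_bounds_near_second_root by (simp add: tlo_def; linarith)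
  have "delta_profile thi - delta_profile (8/5) = ln (1067/575) - c * (thi - 8/5)"
    using ln_ratio[of thi] by (simp add: delta_profile_def c_def thi_def algebra_simps)
  moreover have "0.4515827045 * (thi - 8/5) < c * (thi - 8/5)"
    using ln_half_pi_bounds by (simp add: c_def thi_def)
  ultimately have hi: "delta_profile thi < delta_profile (8/5)"
    using ln_bounds_near_second_root by (simp add: thi_def; linarith)
  have "continuous_on {tlo..thi} delta_profile"
    unfolding delta_profile_def tlo_def by (auto intro!: continuous_intros)
  then obtain t1 where t1: "tlo \<le> t1" "t1 \<le> thi" "delta_profile t1 = delta_profile (8/5)"
    using IVT2'[of delta_profile thi "delta_profile (8/5)" tlo] lo hi by (auto simp: tlo_def thi_def)
  moreover have "tlo < t1" "t1 < thi" using t1 lo hi by (auto simp: le_less)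
  then have "2.9690415 < t1" "t1 < 2.9690445" by (simp_all add: tlo_def thi_def)
  ultimately show ?thesis using that by blast
qed

lemma delta_sign_change:
  assumes "1 / ln (pi/2) \<le> t1" "delta_profile t1 = delta_profile (8/5)"
  shows "t1/3 < q \<Longrightarrow> 0 < delta q" and "q < t1/3 \<Longrightarrow> delta q < 0"
proof -
  define c where "c = ln (pi/2)"
  have "0 < c" "8/5 < 1/c" using ln_half_pi_pos inverse_ln_half_pi_bounds by (auto simp: c_def)
  have incr: "delta_profile a < delta_profile b" if "0 < a" "a < b" "b \<le> 1/c" for a b
    using ln_minus_linear_strict_increasing[OF \<open>0 < c\<close> that] by (simp add: delta_profile_def c_def)
  have decr: "delta_profile b < delta_profile a" if "1/c \<le> a" "a < b" for a b
    using ln_minus_linear_strict_decreasing[OF \<open>0 < c\<close> that] by (simp add: delta_profile_def c_def)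
  show "0 < delta q" if "t1/3 < q"
  proof (rule delta_pos_above_8_15)
    show "8/5 < 3*q" using that assms \<open>8/5 < 1/c\<close> by (simp add: c_def)
    show "delta_profile (3*q) < delta_profile (8/5)"
      using decr[of t1 "3*q"] that assms by (simp add: c_def)
  qed
  show "delta q < 0" if "q < t1/3"
  proof -
    consider "q \<le> 0" | "q = 8/15" | "0 < q" "3*q < 8/5" | "8/5 < 3*q" "3*q \<le> 1/c" | "1/c < 3*q"
      by fastforce
    then show ?thesis
    proof cases
      case 1 then show ?thesis by (simp add: delta_def)
    next
      case 2 then show ?thesis using delta_8_15_neg by (simp only:)
    next
      case 3 then show ?thesis using incr[of "3*q" "8/5"] \<open>8/5 < 1/c\<close> by (intro delta_neg_below_8_15) auto
    next
      case 4 then show ?thesis using incr[of "8/5" "3*q"] by (intro delta_neg_above_8_15) auto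
    next
      case 5
      then have "delta_profile t1 < delta_profile (3*q)" using decr[of "3*q" t1] that by simp
      then show ?thesis using 5 \<open>8/5 < 1/c\<close> assms by (intro delta_neg_above_8_15) auto
    qed
  qed
qed

theorem lemma10:
  shows "\<exists>!q0::real. (\<forall>q. q > q0 \<longrightarrow> delta q > 0) \<and> (\<forall>q. q < q0 \<longrightarrow> delta q < 0)
           \<and> 0.9896805 < q0 \<and> q0 < 0.9896815"
proof -
  obtain t1 where t1: "2.9690415 < t1" "t1 < 2.9690445" "delta_profile t1 = delta_profile (8/5)"
    by (rule delta_profile_second_root)
  moreover have "1 / ln (pi/2) \<le> t1" using t1 inverse_ln_half_pi_bounds by simp
  ultimately have threshold: "\<forall>q>t1/3. 0 < delta q" "\<forall>q<t1/3. delta q < 0"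
    using delta_sign_change by blast+
  show ?thesis
  proof (rule ex1I[of _ "t1/3"])
    show "(\<forall>q>t1/3. 0 < delta q) \<and> (\<forall>q<t1/3. delta q < 0) \<and> 0.9896805 < t1/3 \<and> t1/3 < 0.9896815"
      using threshold t1 by simp
    fix q0 assume "(\<forall>q>q0. 0 < delta q) \<and> (\<forall>q<q0. delta q < 0) \<and> 0.9896805 < q0 \<and> q0 < 0.9896815"
    then show "q0 = t1/3"
      using threshold by (intro sign_threshold_unique[where P = "\<lambda>q. 0 < delta q"]) auto
  qed
qed

end
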